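(* For every integer $n \geq 3$, $\gamma_{b,2}(C_3 \square C_n) = \left\lceil \frac{2n}{3} \right\rceil$.
   Context: For a graph $G$, a $2$-limited broadcast is a function $f: V(G) \to \{0,1,2\}$. A vertex $u$ hears the broadcast from $v$ if $f(v) > 0$ and $d(u,v) \leq f(v)$, where $d$ is the distance in $G$. The broadcast $f$ is dominating if every vertex of $G$ hears the broadcast from some vertex. The cost of $f$ is $\sum_{v \in V(G)} f(v)$. The $2$-limited broadcast domination number $\gamma_{b,2}(G)$ is the minimum cost of a $2$-limited dominating broadcast on $G$. $C_n$ denotes the cycle on $n$ vertices, $P_n$ the path on $n$ vertices, and $\square$ the Cartesian product of graphs. *)

theory Defs
  imports Complex_Main
begin

definition is_walk :: "'a set \<Rightarrow> ('a \<Rightarrow> 'a \<Rightarrow> bool) \<Rightarrow> 'a list \<Rightarrow> 'a \<Rightarrow> 'a \<Rightarrow> bool" where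
  "is_walk V E p u v \<longleftrightarrow> p \<noteq> [] \<and> set p \<subseteq> V \<and> hd p = u \<and> last p = v \<and>
     (\<forall>i. Suc i < length p \<longrightarrow> E (p ! i) (p ! Suc i))"

text \<open>Graph distance (for vertices in the same component): least length of a walk.\<close>
definition gdist :: "'a set \<Rightarrow> ('a \<Rightarrow> 'a \<Rightarrow> bool) \<Rightarrow> 'a \<Rightarrow> 'a \<Rightarrow> nat" where
  "gdist V E u v = (LEAST k. \<exists>p. is_walk V E p u v \<and> length p = Suc k)"

definition connected_graph :: "'a set \<Rightarrow> ('a \<Rightarrow> 'a \<Rightarrow> bool) \<Rightarrow> bool" where
  "connected_graph V E \<longleftrightarrow> (\<forall>u\<in>V. \<forall>v\<in>V. \<exists>p. is_walk V E p u v)"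

definition limited_broadcast :: "nat \<Rightarrow> 'a set \<Rightarrow> ('a \<Rightarrow> nat) \<Rightarrow> bool" where
  "limited_broadcast k V f \<longleftrightarrow> (\<forall>v\<in>V. f v \<le> k) \<and> (\<forall>v. v \<notin> V \<longrightarrow> f v = 0)"

definition hears :: "'a set \<Rightarrow> ('a \<Rightarrow> 'a \<Rightarrow> bool) \<Rightarrow> ('a \<Rightarrow> nat) \<Rightarrow> 'a \<Rightarrow> 'a \<Rightarrow> bool" where
  "hears V E f u v \<longleftrightarrow> f v > 0 \<and> gdist V E u v \<le> f v"

definition dominating_broadcast :: "'a set \<Rightarrow> ('a \<Rightarrow> 'a \<Rightarrow> bool) \<Rightarrow> ('a \<Rightarrow> nat) \<Rightarrow> bool" where
  "dominating_broadcast V E f \<longleftrightarrow> (\<forall>u\<in>V. \<exists>v\<in>V. hears V E f u v)"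

definition broadcast_cost :: "'a set \<Rightarrow> ('a \<Rightarrow> nat) \<Rightarrow> nat" where
  "broadcast_cost V f = (\<Sum>v\<in>V. f v)"

definition limited_broadcast_domination_number ::
    "nat \<Rightarrow> 'a set \<Rightarrow> ('a \<Rightarrow> 'a \<Rightarrow> bool) \<Rightarrow> nat" where
  "limited_broadcast_domination_number k V E =
     (LEAST c. \<exists>f. limited_broadcast k V f \<and> dominating_broadcast V E f \<and> broadcast_cost V f = c)"

definition cycle_V :: "nat \<Rightarrow> nat set" where
  "cycle_V n = {0..<n}"

definition cycle_E :: "nat \<Rightarrow> nat \<Rightarrow> nat \<Rightarrow> bool" where
  "cycle_E n i j \<longleftrightarrow> i < n \<and> j < n \<and> (j = (i + 1) mod n \<or> i = (j + 1) mod n) \<and> i \<noteq> j"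

definition cart_V :: "'a set \<Rightarrow> 'b set \<Rightarrow> ('a \<times> 'b) set" where
  "cart_V V1 V2 = V1 \<times> V2"

definition cart_E :: "('a \<Rightarrow> 'a \<Rightarrow> bool) \<Rightarrow> ('b \<Rightarrow> 'b \<Rightarrow> bool) \<Rightarrow> ('a \<times> 'b) \<Rightarrow> ('a \<times> 'b) \<Rightarrow> bool" where
  "cart_E E1 E2 x y \<longleftrightarrow> (fst x = fst y \<and> E2 (snd x) (snd y)) \<or> (snd x = snd y \<and> E1 (fst x) (fst y))"

end

theory Submission
  imports Defs
begin

text \<open>An optimal broadcast lives in a single row of C_3 \<box> C_n: a broadcast of strength 2 from
  every column congruent to 1 mod 3 is heard in the three columns around it, and if n mod 3 = 1
  the leftover last column broadcasts with strength 1.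

  For the lower bound, charge every broadcaster to the columns that hear it entirely: 2 to each
  of the three columns around a broadcaster of strength 2, and 3 to the column of one of
  strength 1. The column weights then add up to at most three times the cost. A column of weight
  0 is heard only from neighbouring columns, and its three vertices force a neighbouring column
  of weight at least 4; discharging along C_n shows that the weights add up to at least 2n.
  Neither bound needs n \<ge> 3.\<close>

section \<open>Walks and graph distance\<close>

lemma is_walk_Nil [simp]: "\<not> is_walk V E [] u v"
  unfolding is_walk_def by simp

lemma is_walk_singleton_iff [simp]: "is_walk V E [x] u v \<longleftrightarrow> x \<in> V \<and> u = x \<and> v = x"
  unfolding is_walk_def by auto

lemma is_walk_Cons_Cons_iff [simp]:
  "is_walk V E (x # y # p) u v \<longleftrightarrow> x \<in> V \<and> u = x \<and> E x y \<and> is_walk V E (y # p) y v"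
proof -
  have "(\<forall>i. Suc i < length (x # y # p) \<longrightarrow> E ((x # y # p) ! i) ((x # y # p) ! Suc i))
      \<longleftrightarrow> E x y \<and> (\<forall>i. Suc i < length (y # p) \<longrightarrow> E ((y # p) ! i) ((y # p) ! Suc i))"
  proof
    assume "\<forall>i. Suc i < length (x # y # p) \<longrightarrow> E ((x # y # p) ! i) ((x # y # p) ! Suc i)"
    then show "E x y \<and> (\<forall>i. Suc i < length (y # p) \<longrightarrow> E ((y # p) ! i) ((y # p) ! Suc i))"
      by (metis Suc_less_eq length_Cons nth_Cons_0 nth_Cons_Suc zero_less_Suc)
  next
    assume "E x y \<and> (\<forall>i. Suc i < length (y # p) \<longrightarrow> E ((y # p) ! i) ((y # p) ! Suc i))"
    then show "\<forall>i. Suc i < length (x # y # p) \<longrightarrow> E ((x # y # p) ! i) ((x # y # p) ! Suc i)"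
      by (auto simp: less_Suc_eq_0_disj)
  qed
  then show ?thesis
    unfolding is_walk_def by auto
qed

lemma is_walk_endpoints: "is_walk V E p u v \<Longrightarrow> u \<in> V \<and> v \<in> V"
  unfolding is_walk_def by (metis hd_in_set last_in_set subsetD)

lemma is_walk_append:
  "is_walk V E p u w \<Longrightarrow> is_walk V E q w v \<Longrightarrow> is_walk V E (p @ tl q) u v"
proof (induction p arbitrary: u rule: induct_list012)
  case (2 x)
  then show ?case by (cases q) (auto simp: is_walk_def)
next
  case (3 x y p)
  then show ?case by simp
qed simp

lemma is_walk_rev:
  assumes "\<And>x y. E x y \<Longrightarrow> E y x"
  shows "is_walk V E p u v \<Longrightarrow> is_walk V E (rev p) v u"
proof (induction p arbitrary: u rule: induct_list012)
  case (3 x y p)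
  then have "is_walk V E (rev (y # p)) v y" "is_walk V E [y, x] y x"
    using assms is_walk_endpoints[of V E "y # p"] by auto
  from is_walk_append[OF this] show ?case using "3.prems" by simp
qed simp_all

lemma is_walk_map:
  assumes "\<And>x. x \<in> V \<Longrightarrow> h x \<in> V'"
    and "\<And>x y. x \<in> V \<Longrightarrow> y \<in> V \<Longrightarrow> E x y \<Longrightarrow> E' (h x) (h y)"
  shows "is_walk V E p u v \<Longrightarrow> is_walk V' E' (map h p) (h u) (h v)"
proof (induction p arbitrary: u rule: induct_list012)
  case (3 x y p)
  then show ?case using assms is_walk_endpoints[of V E "y # p"] by auto
qed (simp_all add: assms)

lemma gdist_less_length: "is_walk V E p u v \<Longrightarrow> gdist V E u v < length p"
  unfolding gdist_def
  by (cases p) (auto intro!: Least_le[THEN le_less_trans])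

lemma gdist_walk:
  assumes "is_walk V E p u v"
  shows "\<exists>q. is_walk V E q u v \<and> length q = Suc (gdist V E u v)"
proof -
  have "\<exists>k q. is_walk V E q u v \<and> length q = Suc k"
    using assms by (cases p) fastforce+
  then show ?thesis
    unfolding gdist_def by (rule LeastI_ex)
qed

lemma gdist_le_iff:
  assumes "is_walk V E p u v"
  shows "gdist V E u v \<le> k \<longleftrightarrow> (\<exists>q. is_walk V E q u v \<and> length q \<le> Suc k)"
  using gdist_walk[OF assms] gdist_less_length[of V E _ u v] by fastforce

lemma is_walk_length_le_3:
  assumes "is_walk V E q u v" "length q \<le> 3"
  shows "u = v \<or> E u v \<or> (\<exists>x\<in>V. E u x \<and> E x v)"
proof -
  consider x where "q = [x]" | x y where "q = [x, y]" | x y z where "q = [x, y, z]"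
    using assms by (cases q; cases "tl q"; cases "tl (tl q)") auto
  then show ?thesis
    by cases (use assms(1) in auto)
qed

lemma gdist_le_1_iff:
  assumes "is_walk V E p u v"
  shows "gdist V E u v \<le> 1 \<longleftrightarrow> u = v \<or> E u v"
proof
  assume "gdist V E u v \<le> 1"
  then obtain q where "is_walk V E q u v" "length q \<le> 2"
    using gdist_le_iff[OF assms] by auto
  then show "u = v \<or> E u v"
    using is_walk_length_le_3[of V E q u v]
    by (cases q; cases "tl q"; cases "tl (tl q)") auto
next
  have "u \<in> V" "v \<in> V"
    using is_walk_endpoints[OF assms] by auto
  moreover assume "u = v \<or> E u v"
  ultimately have "is_walk V E [u] u v \<or> is_walk V E [u, v] u v"
    by auto
  then show "gdist V E u v \<le> 1"
    using gdist_less_length by fastforce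
qed

lemma gdist_le_2_iff:
  assumes "is_walk V E p u v"
  shows "gdist V E u v \<le> 2 \<longleftrightarrow> u = v \<or> E u v \<or> (\<exists>x\<in>V. E u x \<and> E x v)"
proof
  assume "gdist V E u v \<le> 2"
  then show "u = v \<or> E u v \<or> (\<exists>x\<in>V. E u x \<and> E x v)"
    using gdist_le_iff[OF assms] is_walk_length_le_3 by fastforce
next
  have "u \<in> V" "v \<in> V"
    using is_walk_endpoints[OF assms] by auto
  moreover assume "u = v \<or> E u v \<or> (\<exists>x\<in>V. E u x \<and> E x v)"
  ultimately have "is_walk V E [u] u v \<or> is_walk V E [u, v] u v \<or> (\<exists>x. is_walk V E [u, x, v] u v)"
    by auto
  then show "gdist V E u v \<le> 2"
    using gdist_less_length by fastforce
qed

lemma hears_iff_le_2: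
  assumes "connected_graph V E" "u \<in> V" "v \<in> V" "f v \<le> 2"
  shows "hears V E f u v \<longleftrightarrow>
    (f v = 1 \<and> (u = v \<or> E u v)) \<or> (f v = 2 \<and> (u = v \<or> E u v \<or> (\<exists>x\<in>V. E u x \<and> E x v)))"
proof -
  obtain p where p: "is_walk V E p u v"
    using assms(1-3) unfolding connected_graph_def by blast
  have "f v = 0 \<or> f v = 1 \<or> f v = 2"
    using assms(4) by linarith
  then show ?thesis
    unfolding hears_def using gdist_le_1_iff[OF p] gdist_le_2_iff[OF p] by auto
qed

lemma cycle_walk_upt:
  assumes "j \<le> k" "k < n"
  shows "is_walk (cycle_V n) (cycle_E n) [j..<Suc k] j k"
  using assms
proof (induction k)
  case (Suc k)
  show ?case
  proof (cases "j = Suc k")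
    case False
    then have "is_walk (cycle_V n) (cycle_E n) [j..<Suc k] j k"
      using Suc by simp
    moreover have "is_walk (cycle_V n) (cycle_E n) [k, Suc k] k (Suc k)"
      using Suc.prems by (simp add: cycle_V_def cycle_E_def)
    ultimately show ?thesis
      using is_walk_append Suc.prems(1) by fastforce
  qed (use Suc.prems in \<open>simp add: cycle_V_def\<close>)
qed (simp add: cycle_V_def)

lemma connected_cycle: "connected_graph (cycle_V n) (cycle_E n)"
  unfolding connected_graph_def
proof (intro ballI)
  fix j k assume "j \<in> cycle_V n" "k \<in> cycle_V n"
  then have "j < n" "k < n"
    by (auto simp: cycle_V_def)
  moreover have "\<And>x y. cycle_E n x y \<Longrightarrow> cycle_E n y x"
    unfolding cycle_E_def by blast
  ultimately show "\<exists>p. is_walk (cycle_V n) (cycle_E n) p j k"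
    using cycle_walk_upt[of j k n] is_walk_rev[OF _ cycle_walk_upt[of k j n]]
    by (cases "j \<le> k") auto
qed

lemma connected_cart:
  assumes "connected_graph V1 E1" "connected_graph V2 E2"
  shows "connected_graph (cart_V V1 V2) (cart_E E1 E2)"
  unfolding connected_graph_def
proof (intro ballI)
  fix u v assume "u \<in> cart_V V1 V2" "v \<in> cart_V V1 V2"
  then obtain a j b k where uv: "u = (a, j)" "v = (b, k)" "a \<in> V1" "b \<in> V1" "j \<in> V2" "k \<in> V2"
    by (auto simp: cart_V_def)
  obtain p where p: "is_walk V1 E1 p a b"
    using assms(1) uv unfolding connected_graph_def by blast
  obtain q where q: "is_walk V2 E2 q j k"
    using assms(2) uv unfolding connected_graph_def by blast
  have "is_walk (cart_V V1 V2) (cart_E E1 E2) (map (\<lambda>x. (x, j)) p) (a, j) (b, j)"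
    by (rule is_walk_map[OF _ _ p]) (use uv in \<open>auto simp: cart_V_def cart_E_def\<close>)
  moreover have "is_walk (cart_V V1 V2) (cart_E E1 E2) (map (\<lambda>y. (b, y)) q) (b, j) (b, k)"
    by (rule is_walk_map[OF _ _ q]) (use uv in \<open>auto simp: cart_V_def cart_E_def\<close>)
  ultimately have "is_walk (cart_V V1 V2) (cart_E E1 E2)
      (map (\<lambda>x. (x, j)) p @ tl (map (\<lambda>y. (b, y)) q)) (a, j) (b, k)"
    by (rule is_walk_append)
  then show "\<exists>r. is_walk (cart_V V1 V2) (cart_E E1 E2) r u v"
    using uv by blast
qed

definition cyc_succ :: "nat \<Rightarrow> nat \<Rightarrow> nat" where
  "cyc_succ n j = (if Suc j = n then 0 else Suc j)"

definition cyc_pred :: "nat \<Rightarrow> nat \<Rightarrow> nat" where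
  "cyc_pred n j = (if j = 0 then n - 1 else j - 1)"

lemma cyc_succ_less: "j < n \<Longrightarrow> cyc_succ n j < n"
  unfolding cyc_succ_def by auto

lemma cyc_pred_less: "j < n \<Longrightarrow> cyc_pred n j < n"
  unfolding cyc_pred_def by auto

lemma cyc_pred_succ [simp]: "j < n \<Longrightarrow> cyc_pred n (cyc_succ n j) = j"
  unfolding cyc_succ_def cyc_pred_def by auto

lemma cyc_succ_pred [simp]: "j < n \<Longrightarrow> cyc_succ n (cyc_pred n j) = j"
  unfolding cyc_succ_def cyc_pred_def by auto

lemma bij_betw_cyc_succ: "bij_betw (cyc_succ n) {..<n} {..<n}"
  by (rule bij_betw_byWitness[of _ "cyc_pred n"]) (auto simp: cyc_succ_less cyc_pred_less)

lemma bij_betw_cyc_pred: "bij_betw (cyc_pred n) {..<n} {..<n}"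
  by (rule bij_betw_byWitness[of _ "cyc_succ n"]) (auto simp: cyc_succ_less cyc_pred_less)

lemma cycle_E_iff:
  "cycle_E n i j \<longleftrightarrow> i < n \<and> j < n \<and> i \<noteq> j \<and> (j = cyc_succ n i \<or> j = cyc_pred n i)"
proof -
  have "i < n \<Longrightarrow> j < n \<Longrightarrow> (i = (j + 1) mod n \<longleftrightarrow> j = cyc_pred n i)"
    unfolding cyc_pred_def by (cases "Suc j = n") auto
  moreover have "i < n \<Longrightarrow> (i + 1) mod n = cyc_succ n i"
    unfolding cyc_succ_def by (cases "Suc i = n") auto
  ultimately show ?thesis
    unfolding cycle_E_def by auto
qed

lemma cycle_E_3_iff: "cycle_E 3 a b \<longleftrightarrow> a < 3 \<and> b < 3 \<and> a \<noteq> b"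
  unfolding cycle_E_iff cyc_succ_def cyc_pred_def by auto

text \<open>Discharging along a cycle: a zero entry takes 2 from a neighbour of weight at least 4,
  from the left one when possible. A positive entry then keeps at least 2: it gives to at most
  two zero neighbours, and when it gives to both, divisibility by 3 lifts its weight from 4 to 6.\<close>

lemma cycle_discharging:
  fixes g :: "nat \<Rightarrow> nat"
  assumes heavy_neighbour: "\<And>c. c < n \<Longrightarrow> g c = 0 \<Longrightarrow> 4 \<le> g (cyc_pred n c) \<or> 4 \<le> g (cyc_succ n c)"
    and positive: "\<And>c. c < n \<Longrightarrow> g c \<noteq> 0 \<Longrightarrow> 2 \<le> g c"
    and isolated: "\<And>c. c < n \<Longrightarrow> g (cyc_pred n c) = 0 \<Longrightarrow> g (cyc_succ n c) = 0 \<Longrightarrow> 3 dvd g c"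
  shows "2 * n \<le> (\<Sum>c<n. g c)"
proof -
  define from_left where "from_left c \<longleftrightarrow> g c = 0 \<and> 4 \<le> g (cyc_pred n c)" for c
  define from_right where "from_right c \<longleftrightarrow> g c = 0 \<and> \<not> 4 \<le> g (cyc_pred n c)" for c
  have local_balance:
    "2 + 2 * of_bool (from_left (cyc_succ n c)) + 2 * of_bool (from_right (cyc_pred n c))
      \<le> g c + 2 * of_bool (g c = 0)" if c: "c < n" for c
  proof (cases "g c = 0")
    case True
    have "\<not> from_right (cyc_pred n c)"
      using heavy_neighbour[OF cyc_pred_less[OF c]] True c unfolding from_right_def by auto
    then show ?thesis
      using True c unfolding from_left_def by simp
  next
    case False
    have left: "4 \<le> g c" if "from_left (cyc_succ n c)"
      using that c unfolding from_left_def by simp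
    have right: "4 \<le> g c" if "from_right (cyc_pred n c)"
      using that heavy_neighbour[OF cyc_pred_less[OF c]] c unfolding from_right_def by auto
    have both: "6 \<le> g c" if "from_left (cyc_succ n c)" "from_right (cyc_pred n c)"
    proof -
      have "3 dvd g c"
        using that isolated[OF c] unfolding from_left_def from_right_def by simp
      then show ?thesis
        using left[OF that(1)] by presburger
    qed
    show ?thesis
      using False positive[OF c] left right both
      by (cases "from_left (cyc_succ n c)"; cases "from_right (cyc_pred n c)") auto
  qed
  have "2 * n + 2 * (\<Sum>c<n. of_bool (from_left (cyc_succ n c))) + 2 * (\<Sum>c<n. of_bool (from_right (cyc_pred n c)))
      \<le> (\<Sum>c<n. g c) + 2 * (\<Sum>c<n. of_bool (g c = 0))"
  proof -
    have "(\<Sum>c<n. 2 + 2 * of_bool (from_left (cyc_succ n c)) + 2 * of_bool (from_right (cyc_pred n c)))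
        \<le> (\<Sum>c<n. g c + 2 * of_bool (g c = 0))"
      by (intro sum_mono local_balance) simp
    then show ?thesis
      by (simp only: sum.distrib sum_distrib_left[symmetric] sum_constant card_lessThan) simp
  qed
  moreover have "(\<Sum>c<n. of_bool (from_left (cyc_succ n c))) = (\<Sum>c<n. of_bool (from_left c) :: nat)"
    by (rule sum.reindex_bij_betw[OF bij_betw_cyc_succ])
  moreover have "(\<Sum>c<n. of_bool (from_right (cyc_pred n c))) = (\<Sum>c<n. of_bool (from_right c) :: nat)"
    by (rule sum.reindex_bij_betw[OF bij_betw_cyc_pred])
  moreover have "(\<Sum>c<n. of_bool (g c = 0)) = (\<Sum>c<n. of_bool (from_left c) + of_bool (from_right c) :: nat)"
    by (rule sum.cong) (auto simp: from_left_def from_right_def)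
  ultimately show ?thesis
    by (simp only: sum.distrib distrib_left)
qed

section \<open>The graph C_3 \<box> C_n\<close>

text \<open>Vertex (a, c) lies in row a and column c.\<close>

abbreviation torus_V :: "nat \<Rightarrow> (nat \<times> nat) set" where
  "torus_V n \<equiv> cart_V (cycle_V 3) (cycle_V n)"

abbreviation torus_E :: "nat \<Rightarrow> nat \<times> nat \<Rightarrow> nat \<times> nat \<Rightarrow> bool" where
  "torus_E n \<equiv> cart_E (cycle_E 3) (cycle_E n)"

lemma torus_V_eq: "torus_V n = {..<3} \<times> {..<n}"
  unfolding cart_V_def cycle_V_def by (simp add: atLeast0LessThan)

lemma torus_E_iff:
  "torus_E n (a, j) (b, k) \<longleftrightarrow> (a = b \<and> cycle_E n j k) \<or> (j = k \<and> a < 3 \<and> b < 3 \<and> a \<noteq> b)"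
  unfolding cart_E_def cycle_E_3_iff by auto

lemma torus_E_columns:
  "torus_E n (a, j) (b, k) \<Longrightarrow> j = k \<or> (a = b \<and> j < n \<and> k \<in> {cyc_pred n j, cyc_succ n j})"
  unfolding torus_E_iff cycle_E_iff by auto

lemma connected_torus: "connected_graph (torus_V n) (torus_E n)"
  by (intro connected_cart connected_cycle)

lemma torus_hears_iff:
  assumes "u \<in> torus_V n" "v \<in> torus_V n" "f v \<le> 2"
  shows "hears (torus_V n) (torus_E n) f u v \<longleftrightarrow>
    (f v = 1 \<and> (u = v \<or> torus_E n u v)) \<or>
    (f v = 2 \<and> (u = v \<or> torus_E n u v \<or> (\<exists>x\<in>torus_V n. torus_E n u x \<and> torus_E n x v)))"
  using connected_torus assms by (rule hears_iff_le_2)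

lemma torus_near_columns:
  assumes "a < 3" "b < 3" "j < n" "k < n" "k = j \<or> cycle_E n j k"
  shows "(a, j) = (b, k) \<or> torus_E n (a, j) (b, k) \<or>
    (\<exists>x\<in>torus_V n. torus_E n (a, j) x \<and> torus_E n x (b, k))"
proof -
  have "torus_E n (a, j) (b, j)" if "a \<noteq> b"
    using that assms by (simp add: torus_E_iff)
  moreover have "torus_E n (b, j) (b, k)" if "k \<noteq> j"
    using that assms by (simp add: torus_E_iff)
  moreover have "(b, j) \<in> torus_V n"
    using assms by (simp add: torus_V_eq)
  ultimately show ?thesis
    by (cases "a = b"; cases "k = j") auto
qed

section \<open>An optimal broadcast\<close>

definition torus_broadcast :: "nat \<Rightarrow> nat \<times> nat \<Rightarrow> nat" where
  "torus_broadcast n = (\<lambda>(a, c). if a = 0 \<and> c < n then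
     (if c mod 3 = 1 then 2 else if Suc c = n \<and> n mod 3 = 1 then 1 else 0) else 0)"

lemma limited_torus_broadcast: "limited_broadcast 2 (torus_V n) (torus_broadcast n)"
  unfolding limited_broadcast_def torus_broadcast_def torus_V_eq by auto

lemma dominating_torus_broadcast:
  "dominating_broadcast (torus_V n) (torus_E n) (torus_broadcast n)"
  unfolding dominating_broadcast_def
proof
  fix u assume u: "u \<in> torus_V n"
  then obtain a c where ac: "u = (a, c)" "a < 3" "c < n"
    by (auto simp: torus_V_eq)
  have bounded: "torus_broadcast n v \<le> 2" for v
    unfolding torus_broadcast_def by (auto split: prod.split)
  show "\<exists>v\<in>torus_V n. hears (torus_V n) (torus_E n) (torus_broadcast n) u v"
  proof (cases "Suc c = n \<and> n mod 3 = 1")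
    case True
    then have "c mod 3 \<noteq> 1"
      by presburger
    then have "torus_broadcast n (0, c) = 1"
      using True unfolding torus_broadcast_def by simp
    moreover have "(0, c) \<in> torus_V n"
      using ac by (simp add: torus_V_eq)
    moreover have "u = (0, c) \<or> torus_E n u (0, c)"
      using ac by (auto simp: torus_E_iff)
    ultimately show ?thesis
      using torus_hears_iff[OF u _ bounded] by auto
  next
    case False
    define c' where "c' = 3 * (c div 3) + 1"
    have "c mod 3 = 0 \<or> c mod 3 = 1 \<or> c mod 3 = 2"
      by linarith
    then have "c' = c \<or> c' = Suc c \<and> Suc c < n \<or> c' = c - 1 \<and> 0 < c"
      using False ac(3) unfolding c'_def by (elim disjE) (presburger+)
    then have c': "c' < n" "c' = c \<or> cycle_E n c c'"
      using ac(3) unfolding cycle_E_iff cyc_succ_def cyc_pred_def by auto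
    have "torus_broadcast n (0, c') = 2"
      using c'(1) unfolding torus_broadcast_def c'_def by simp
    moreover have "(0, c') \<in> torus_V n"
      using c'(1) by (simp add: torus_V_eq)
    ultimately show ?thesis
      using torus_near_columns[of a 0 c n c'] ac c' torus_hears_iff[OF u _ bounded] by auto
  qed
qed

lemma sum_of_bool_mod_3_eq_1: "(\<Sum>c<n. of_bool (c mod 3 = 1) :: nat) = (n + 1) div 3"
proof (induction n)
  case (Suc n)
  then show ?case
    by (cases "n mod 3 = 1") (simp_all, presburger+)
qed simp

lemma broadcast_cost_torus_broadcast:
  "broadcast_cost (torus_V n) (torus_broadcast n) = (2 * n + 2) div 3"
proof -
  have off_row_0: "torus_broadcast n (a, c) = 0" if "a \<noteq> 0" for a c
    using that by (simp add: torus_broadcast_def)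
  have row_0: "torus_broadcast n (0, c) =
      2 * of_bool (c mod 3 = 1) + (if Suc c = n then of_bool (n mod 3 = 1) else 0)" if "c < n" for c
  proof -
    have "Suc c = n \<Longrightarrow> n mod 3 = 1 \<Longrightarrow> c mod 3 \<noteq> 1"
      by presburger
    then show ?thesis
      using that unfolding torus_broadcast_def by (simp split: if_split)
  qed
  have "broadcast_cost (torus_V n) (torus_broadcast n) = (\<Sum>a<3::nat. \<Sum>c<n. torus_broadcast n (a, c))"
    unfolding broadcast_cost_def torus_V_eq sum.cartesian_product by simp
  also have "\<dots> = (\<Sum>c<n. torus_broadcast n (0, c))"
    by (simp add: off_row_0 numeral_3_eq_3 lessThan_Suc)
  also have "\<dots> = (\<Sum>c<n. 2 * of_bool (c mod 3 = 1) + (if Suc c = n then of_bool (n mod 3 = 1) else 0))"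
    by (rule sum.cong) (simp_all add: row_0)
  also have "\<dots> = 2 * ((n + 1) div 3) + of_bool (n mod 3 = 1)"
  proof -
    have "(\<Sum>c<n. if Suc c = n then of_bool (n mod 3 = 1) else 0 :: nat) = of_bool (n mod 3 = 1)"
      by (cases n) (simp_all add: sum.delta')
    then show ?thesis
      by (simp only: sum.distrib sum_distrib_left[symmetric] sum_of_bool_mod_3_eq_1)
  qed
  also have "\<dots> = (2 * n + 2) div 3"
    by (cases "n mod 3 = 1") (simp_all, presburger+)
  finally show ?thesis .
qed

section \<open>The lower bound\<close>

definition column_charge :: "nat \<Rightarrow> (nat \<times> nat \<Rightarrow> nat) \<Rightarrow> nat \<times> nat \<Rightarrow> nat \<Rightarrow> nat" where
  "column_charge n f v c =
     (if f v = 2 \<and> snd v \<in> {c, cyc_pred n c, cyc_succ n c} then 2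
      else if f v = 1 \<and> snd v = c then 3 else 0)"

definition column_weight :: "nat \<Rightarrow> (nat \<times> nat \<Rightarrow> nat) \<Rightarrow> nat \<Rightarrow> nat" where
  "column_weight n f c = (\<Sum>v\<in>torus_V n. column_charge n f v c)"

lemma sum_column_charge_le:
  assumes "k < n" "f (b, k) \<le> 2"
  shows "(\<Sum>c<n. column_charge n f (b, k) c) \<le> 3 * f (b, k)"
proof -
  consider "f (b, k) = 0" | "f (b, k) = 1" | "f (b, k) = 2"
    using assms(2) by linarith
  then show ?thesis
  proof cases
    case 1
    then show ?thesis
      by (simp add: column_charge_def)
  next
    case 2
    then have "(\<Sum>c<n. column_charge n f (b, k) c) = (\<Sum>c<n. if c = k then 3 else 0)"
      by (intro sum.cong) (auto simp: column_charge_def)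
    then show ?thesis
      using 2 assms(1) by simp
  next
    case 3
    have "(\<Sum>c<n. column_charge n f (b, k) c) = (\<Sum>c<n. if k \<in> {c, cyc_pred n c, cyc_succ n c} then 2 else 0)"
      using 3 by (intro sum.cong) (auto simp: column_charge_def)
    also have "\<dots> = (\<Sum>c\<in>{c\<in>{..<n}. k \<in> {c, cyc_pred n c, cyc_succ n c}}. 2)"
      by (rule sum.inter_filter[symmetric]) simp
    also have "\<dots> \<le> (\<Sum>c\<in>{k, cyc_succ n k, cyc_pred n k}. 2)"
      by (rule sum_mono2) auto
    also have "\<dots> \<le> 6"
      by (simp add: card_insert_if)
    finally show ?thesis
      using 3 by simp
  qed
qed

lemma sum_column_weight_le:
  assumes "\<forall>v\<in>torus_V n. f v \<le> 2"
  shows "(\<Sum>c<n. column_weight n f c) \<le> 3 * broadcast_cost (torus_V n) f"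
proof -
  have "(\<Sum>c<n. column_weight n f c) = (\<Sum>v\<in>torus_V n. \<Sum>c<n. column_charge n f v c)"
    unfolding column_weight_def by (rule sum.swap)
  also have "\<dots> \<le> (\<Sum>v\<in>torus_V n. 3 * f v)"
    using assms sum_column_charge_le by (intro sum_mono) (auto simp: torus_V_eq)
  finally show ?thesis
    by (simp add: broadcast_cost_def sum_distrib_left)
qed

lemma column_charge_pair_le_weight:
  assumes "x \<in> torus_V n" "y \<in> torus_V n" "x \<noteq> y"
  shows "column_charge n f x c + column_charge n f y c \<le> column_weight n f c"
proof -
  have "column_charge n f x c + column_charge n f y c = (\<Sum>v\<in>{x, y}. column_charge n f v c)"
    using assms(3) by simp
  also have "\<dots> \<le> column_weight n f c"
    unfolding column_weight_def using assms by (intro sum_mono2) (auto simp: torus_V_eq)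
  finally show ?thesis .
qed

lemma column_weight_zero_iff:
  "column_weight n f c = 0 \<longleftrightarrow> (\<forall>v\<in>torus_V n. column_charge n f v c = 0)"
  unfolding column_weight_def by (simp add: torus_V_eq)

lemma column_weight_ge_2: "column_weight n f c \<noteq> 0 \<Longrightarrow> 2 \<le> column_weight n f c"
proof -
  assume "column_weight n f c \<noteq> 0"
  then obtain v where v: "v \<in> torus_V n" "column_charge n f v c \<noteq> 0"
    using column_weight_zero_iff[of n f c] by auto
  then have "2 \<le> column_charge n f v c"
    unfolding column_charge_def by (auto split: if_splits)
  also have "\<dots> \<le> column_weight n f c"
    unfolding column_weight_def using v(1) by (intro member_le_sum) (auto simp: torus_V_eq)
  finally show ?thesis .
qed

lemma column_weight_dvd_3:
  assumes "c < n" "column_weight n f (cyc_pred n c) = 0" "column_weight n f (cyc_succ n c) = 0"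
  shows "3 dvd column_weight n f c"
  unfolding column_weight_def
proof (rule dvd_sum)
  fix v assume v: "v \<in> torus_V n"
  have "\<not> (f v = 2 \<and> snd v \<in> {c, cyc_pred n c, cyc_succ n c})"
  proof
    assume "f v = 2 \<and> snd v \<in> {c, cyc_pred n c, cyc_succ n c}"
    then have "column_charge n f v (cyc_pred n c) = 2 \<or> column_charge n f v (cyc_succ n c) = 2"
      using assms(1) unfolding column_charge_def by auto
    then show False
      using assms(2,3) v column_weight_zero_iff by fastforce
  qed
  then show "3 dvd column_charge n f v c"
    unfolding column_charge_def by auto
qed

lemma zero_column_row_witness:
  assumes bounded: "\<forall>v\<in>torus_V n. f v \<le> 2"
    and dom: "dominating_broadcast (torus_V n) (torus_E n) f"
    and j: "j < n" and a: "a < 3" and zero: "column_weight n f j = 0"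
  shows "\<exists>k<n. \<exists>c\<in>{cyc_pred n j, cyc_succ n j}. 2 \<le> column_charge n f (a, k) c"
proof -
  have u: "(a, j) \<in> torus_V n"
    using a j by (simp add: torus_V_eq)
  then obtain b k where v: "(b, k) \<in> torus_V n" and hear: "hears (torus_V n) (torus_E n) f (a, j) (b, k)"
    using dom unfolding dominating_broadcast_def by auto
  have k: "k < n"
    using v by (simp add: torus_V_eq)
  have uncharged: "column_charge n f (b, k) j = 0"
    using zero v column_weight_zero_iff by blast
  consider "f (b, k) = 1" "(a, j) = (b, k) \<or> torus_E n (a, j) (b, k)"
    | "f (b, k) = 2" "(a, j) = (b, k) \<or> torus_E n (a, j) (b, k) \<or>
        (\<exists>x\<in>torus_V n. torus_E n (a, j) x \<and> torus_E n x (b, k))"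
    using hear torus_hears_iff[OF u v] bounded v by auto
  then show ?thesis
  proof cases
    case 1
    then have "b = a" "k \<in> {cyc_pred n j, cyc_succ n j}"
      using uncharged torus_E_columns[of n a j b k] unfolding column_charge_def by auto
    moreover have "column_charge n f (b, k) k = 3"
      using 1 unfolding column_charge_def by simp
    ultimately show ?thesis
      using k by fastforce
  next
    case 2
    then have far: "k \<notin> {j, cyc_pred n j, cyc_succ n j}"
      using uncharged unfolding column_charge_def by auto
    then obtain a' j' where "torus_E n (a, j) (a', j')" "torus_E n (a', j') (b, k)"
      using 2 torus_E_columns[of n a j b k] by auto
    then have "a' = a" "j' \<in> {cyc_pred n j, cyc_succ n j}" "b = a'" "k \<in> {cyc_pred n j', cyc_succ n j'}"
      using far torus_E_columns[of n a j a' j'] torus_E_columns[of n a' j' b k] by auto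
    moreover have "column_charge n f (b, k) j' = 2"
      using 2 calculation(4) unfolding column_charge_def by auto
    ultimately show ?thesis
      using k by fastforce
  qed
qed

lemma zero_column_heavy_neighbour:
  assumes bounded: "\<forall>v\<in>torus_V n. f v \<le> 2"
    and dom: "dominating_broadcast (torus_V n) (torus_E n) f"
    and j: "j < n" and zero: "column_weight n f j = 0"
  shows "4 \<le> column_weight n f (cyc_pred n j) \<or> 4 \<le> column_weight n f (cyc_succ n j)"
proof -
  have witness: "\<exists>k<n. \<exists>c\<in>{cyc_pred n j, cyc_succ n j}. 2 \<le> column_charge n f (a, k) c" if "a < 3" for a
    using zero_column_row_witness[OF bounded dom j that zero] .
  obtain k0 c0 where w0: "k0 < n" "c0 \<in> {cyc_pred n j, cyc_succ n j}" "2 \<le> column_charge n f (0, k0) c0"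
    using witness[of 0] by auto
  obtain k1 c1 where w1: "k1 < n" "c1 \<in> {cyc_pred n j, cyc_succ n j}" "2 \<le> column_charge n f (1, k1) c1"
    using witness[of 1] by auto
  obtain k2 c2 where w2: "k2 < n" "c2 \<in> {cyc_pred n j, cyc_succ n j}" "2 \<le> column_charge n f (2, k2) c2"
    using witness[of 2] by auto
  have heavy: "4 \<le> column_weight n f c"
    if "x \<in> torus_V n" "y \<in> torus_V n" "x \<noteq> y" "2 \<le> column_charge n f x c" "2 \<le> column_charge n f y c"
    for x y c
    using column_charge_pair_le_weight[OF that(1-3), of f c] that(4,5) by linarith
  have "c0 = c1 \<or> c0 = c2 \<or> c1 = c2"
    using w0(2) w1(2) w2(2) by auto
  then have "4 \<le> column_weight n f c0 \<or> 4 \<le> column_weight n f c2"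
    using heavy[of "(0, k0)" "(1, k1)"] heavy[of "(0, k0)" "(2, k2)"] heavy[of "(1, k1)" "(2, k2)"]
      w0 w1 w2 by (auto simp: torus_V_eq)
  then show ?thesis
    using w0(2) w2(2) by auto
qed

lemma broadcast_cost_lower_bound:
  assumes "limited_broadcast 2 (torus_V n) f"
    and dom: "dominating_broadcast (torus_V n) (torus_E n) f"
  shows "2 * n \<le> 3 * broadcast_cost (torus_V n) f"
proof -
  have bounded: "\<forall>v\<in>torus_V n. f v \<le> 2"
    using assms(1) unfolding limited_broadcast_def by blast
  have "2 * n \<le> (\<Sum>c<n. column_weight n f c)"
    by (rule cycle_discharging)
      (use zero_column_heavy_neighbour[OF bounded dom] column_weight_ge_2 column_weight_dvd_3 in auto)
  also have "\<dots> \<le> 3 * broadcast_cost (torus_V n) f"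
    by (rule sum_column_weight_le[OF bounded])
  finally show ?thesis .
qed

lemma nat_ceiling_two_thirds: "nat \<lceil>2 * real n / 3\<rceil> = (2 * n + 2) div 3"
proof -
  have "2 * n \<le> 3 * ((2 * n + 2) div 3)" "3 * ((2 * n + 2) div 3) \<le> 2 * n + 2"
    by presburger+
  then have "real (2 * n) \<le> real (3 * ((2 * n + 2) div 3))"
    "real (3 * ((2 * n + 2) div 3)) \<le> real (2 * n + 2)"
    by (simp_all only: of_nat_le_iff)
  then have "\<lceil>2 * real n / 3\<rceil> = int ((2 * n + 2) div 3)"
    by (intro ceiling_unique) simp_all
  then show ?thesis
    by simp
qed

theorem theorem4p1:
  fixes n :: nat
  assumes "n \<ge> 3"
  shows "limited_broadcast_domination_number 2 (cart_V (cycle_V 3) (cycle_V n))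
           (cart_E (cycle_E 3) (cycle_E n)) = nat \<lceil>2 * real n / 3\<rceil>"
  unfolding limited_broadcast_domination_number_def nat_ceiling_two_thirds
proof (rule Least_equality)
  show "\<exists>f. limited_broadcast 2 (torus_V n) f \<and> dominating_broadcast (torus_V n) (torus_E n) f \<and>
      broadcast_cost (torus_V n) f = (2 * n + 2) div 3"
    using limited_torus_broadcast dominating_torus_broadcast broadcast_cost_torus_broadcast by blast
next
  fix c
  assume "\<exists>f. limited_broadcast 2 (torus_V n) f \<and> dominating_broadcast (torus_V n) (torus_E n) f \<and>
      broadcast_cost (torus_V n) f = c"
  then have "2 * n \<le> 3 * c"
    using broadcast_cost_lower_bound by blast
  then show "(2 * n + 2) div 3 \<le> c"
    by presburger
qed

end
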